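(* Let $\mathbb{F},\widetilde{\mathbb{F}}$ be arbitrary fields of characteristic not $2$, and let $f:\mathbb{F}\to\widetilde{\mathbb{F}}$ be an SD-map. Then $f$ is injective, multiplicative (i.e.\ $f(xy)=f(x)f(y)$ for all $x,y\in\mathbb{F}$), and odd (i.e.\ $f(-x)=-f(x)$ for all $x$), and $f(0)=0$, $f(1)=1$.
   Context: A map $f:\mathbb{F}\to\widetilde{\mathbb{F}}$ between fields is called an SD-map if for all $x\neq y$ in $\mathbb{F}$ one has $f(x)\neq f(y)$ and \[ f\left(\frac{x+y}{x-y}\right)=\frac{f(x)+f(y)}{f(x)-f(y)}. \] *)

theory Defs
  imports Main
begin

definition SD_map :: "('a::field \<Rightarrow> 'b::field) \<Rightarrow> bool" where
  "SD_map f \<longleftrightarrow> (\<forall>x y. x \<noteq> y \<longrightarrow>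
      f x \<noteq> f y \<and> f ((x + y) / (x - y)) = (f x + f y) / (f x - f y))"

end

(*
  Putting y = 0 in the SD-identity gives f 1 * (f x - f 0) = f x + f 0 for all x \<noteq> 0;
  comparing x = 1 with x = -1 and using injectivity forces f 1 = 1, and then f 0 = 0.
  Putting y = -x gives f (-x) = - f x. For y \<noteq> 0 the left-hand side of the identity
  only depends on t = x / y through the Cayley transform C t = (t + 1) / (t - 1), so
  C (f (x / y)) = C (f x / f y); as C is injective away from 1, f (x / y) = f x / f y,
  and multiplicativity follows.
*)
theory Submission
  imports Defs
begin

lemma two_eq_zero_iff_CHAR_eq_2:
  "(2 :: 'a :: {semiring_1, zero_neq_one}) = 0 \<longleftrightarrow> CHAR('a) = 2"
proof -
  have "(2 :: 'a) = 0 \<longleftrightarrow> CHAR('a) dvd 2"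
    using of_nat_eq_0_iff_char_dvd[of 2] by simp
  also have "\<dots> \<longleftrightarrow> CHAR('a) = 2"
    using CHAR_not_1 dvd_imp_le[of "CHAR('a)" 2]
    by (auto simp: le_Suc_eq numeral_2_eq_2)
  finally show ?thesis .
qed

lemma Cayley_transform_eq_iff:
  fixes u v :: "'a :: field"
  assumes "(2 :: 'a) \<noteq> 0" and "u \<noteq> 1" and "v \<noteq> 1"
  shows "(u + 1) / (u - 1) = (v + 1) / (v - 1) \<longleftrightarrow> u = v"
proof
  assume "(u + 1) / (u - 1) = (v + 1) / (v - 1)"
  with assms(2,3) have "(u + 1) * (v - 1) = (v + 1) * (u - 1)"
    by (simp add: field_simps)
  with assms(1) show "u = v"
    by (auto simp: algebra_simps)
qed simp

context
  fixes f :: "'a :: field \<Rightarrow> 'b :: field"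
  assumes SD: "SD_map f"
begin

lemma SD_map_neq: "x \<noteq> y \<Longrightarrow> f x \<noteq> f y"
  using SD unfolding SD_map_def by blast

lemma SD_map_eq: "x \<noteq> y \<Longrightarrow> f ((x + y) / (x - y)) = (f x + f y) / (f x - f y)"
  using SD unfolding SD_map_def by blast

lemma SD_map_inj: "inj f"
  by (meson SD_map_neq injI)

lemma SD_map_at_zero:
  assumes "x \<noteq> 0"
  shows "(f 1 - 1) * f x = f 0 * (f 1 + 1)"
proof -
  have "f 1 = (f x + f 0) / (f x - f 0)"
    using SD_map_eq[OF assms] assms by simp
  moreover have "f x - f 0 \<noteq> 0"
    using SD_map_neq[OF assms] by simp
  ultimately show ?thesis
    by (simp add: field_simps)
qed

lemma SD_map_one:
  assumes "CHAR('a) \<noteq> 2"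
  shows "f 1 = 1"
proof -
  have "(1 :: 'a) \<noteq> -1"
    using assms two_eq_zero_iff_CHAR_eq_2[where 'a = 'a]
    by (metis add.inverse_inverse diff_minus_eq_add diff_self one_add_one)
  then have "f 1 - f (-1) \<noteq> 0"
    using SD_map_neq by simp
  moreover have "(f 1 - 1) * (f 1 - f (-1)) = 0"
    using SD_map_at_zero[of 1] SD_map_at_zero[of "-1"] by (simp add: right_diff_distrib)
  ultimately show ?thesis
    by simp
qed

lemma SD_map_zero:
  assumes "CHAR('a) \<noteq> 2" and "CHAR('b) \<noteq> 2"
  shows "f 0 = 0"
proof -
  have "(2 :: 'b) \<noteq> 0"
    using assms(2) two_eq_zero_iff_CHAR_eq_2[where 'a = 'b] by simp
  then show ?thesis
    using SD_map_at_zero[of 1] SD_map_one[OF assms(1)] by simp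
qed

lemma SD_map_minus:
  assumes "CHAR('a) \<noteq> 2" and "CHAR('b) \<noteq> 2"
  shows "f (- x) = - f x"
proof (cases "x = 0")
  case True
  then show ?thesis
    using SD_map_zero[OF assms] by simp
next
  case False
  with assms(1) have "x \<noteq> - x"
    using two_eq_zero_iff_CHAR_eq_2[where 'a = 'a] by (metis mult_2 add_eq_0_iff2 mult_eq_0_iff)
  then have "(f x + f (- x)) / (f x - f (- x)) = 0" and "f x - f (- x) \<noteq> 0"
    using SD_map_eq[of x "- x"] SD_map_neq[of x "- x"] SD_map_zero[OF assms] by simp_all
  then show ?thesis
    by (simp add: add_eq_0_iff2)
qed

lemma SD_map_divide:
  assumes "CHAR('a) \<noteq> 2" and "CHAR('b) \<noteq> 2"
  shows "f (x / y) = f x / f y"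
proof (cases "y = 0 \<or> x = y")
  case True
  then show ?thesis
    using SD_map_zero[OF assms] SD_map_one[OF assms(1)] SD_map_neq[of y 0] by auto
next
  case False
  then have "y \<noteq> 0" and "x \<noteq> y"
    by simp_all
  then have "f y \<noteq> 0" and "f x \<noteq> f y"
    using SD_map_zero[OF assms] SD_map_neq[of y 0] SD_map_neq[of x y] by simp_all
  have f1: "f 1 = 1"
    by (rule SD_map_one[OF assms(1)])
  have "x / y \<noteq> 1"
    using \<open>y \<noteq> 0\<close> \<open>x \<noteq> y\<close> by simp
  then have "f (x / y) \<noteq> 1"
    using SD_map_neq f1 by metis
  have "f x / f y \<noteq> 1"
    using \<open>f y \<noteq> 0\<close> \<open>f x \<noteq> f y\<close> by simp
  have "(x / y + 1) / (x / y - 1) = (x + y) / (x - y)"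
    using \<open>y \<noteq> 0\<close> \<open>x \<noteq> y\<close> by (simp add: field_simps)
  then have "(f (x / y) + 1) / (f (x / y) - 1) = f ((x + y) / (x - y))"
    using SD_map_eq[OF \<open>x / y \<noteq> 1\<close>] f1 by simp
  also have "\<dots> = (f x + f y) / (f x - f y)"
    using SD_map_eq[OF \<open>x \<noteq> y\<close>] .
  also have "\<dots> = (f x / f y + 1) / (f x / f y - 1)"
    using \<open>f y \<noteq> 0\<close> \<open>f x \<noteq> f y\<close> by (simp add: field_simps)
  finally show ?thesis
    using Cayley_transform_eq_iff \<open>f (x / y) \<noteq> 1\<close> \<open>f x / f y \<noteq> 1\<close> assms(2)
      two_eq_zero_iff_CHAR_eq_2[where 'a = 'b] by blast
qed

lemma SD_map_mult:
  assumes "CHAR('a) \<noteq> 2" and "CHAR('b) \<noteq> 2"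
  shows "f (x * y) = f x * f y"
  using SD_map_divide[OF assms, of x "1 / y"] SD_map_divide[OF assms, of 1 y]
    SD_map_one[OF assms(1)] by simp

end

theorem theorem2p1:
  fixes f :: "'a::field \<Rightarrow> 'b::field"
  assumes "CHAR('a) \<noteq> 2" and "CHAR('b) \<noteq> 2"
    and "SD_map f"
  shows "inj f \<and> (\<forall>x y. f (x * y) = f x * f y) \<and> (\<forall>x. f (- x) = - f x)
         \<and> f 0 = 0 \<and> f 1 = 1"
  using SD_map_inj SD_map_mult SD_map_minus SD_map_zero SD_map_one assms by blast

end
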